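(* Let $(X,d)$ be a nonempty compact metric space and let $F:X\rightarrow K(X)$ be a set-valued $(\beta_x,r_x)$-local contraction on $X$. Then: (a) if $X$ is $r$-chainable for some $r>0$ such that $F$ is a $(\beta,r)$-uniform local contraction for some $\beta\in[0,1)$, then $\mathrm{Fix}(F)\neq\varnothing$; (b) if $X$ is the union of finitely many pairwise disjoint connected components and $F(x)$ is connected for every $x\in X$, then there is a positive integer $m$ such that $\mathrm{Fix}(F^{(m)})\neq\varnothing$.
   Context: $K(X)$ is the set of nonempty compact subsets of $X$; $H$ is the Hausdorff distance $H(A,B)=\max\{\sup_{a\in A}d(a,B),\sup_{b\in B}d(b,A)\}$ with $d(y,A)=\inf_{a\in A}d(a,y)$; $B_r(x)=\{z\in X:d(x,z)\le r\}$. $F$ is a set-valued $(\beta_x,r_x)$-local contraction if for every $x\in X$ there exist $r_x>0$ and $\beta_x\in[0,1)$ such that $H(F(y),F(z))\le\beta_x d(y,z)$ for all $y,z\in B_{r_x}(x)$; it is a $(\beta,r)$-uniform local contraction if this holds with $\beta_x=\beta$ and $r_x=r$ independent of $x$. An $r$-chain from $x$ to $y$ is a finite sequence $z_0=x,\ldots,z_n=y$ with $d(z_{i-1},z_i)<r$; $X$ is $r$-chainable if any two points are joined by an $r$-chain. Composition of set-valued maps: $(G\circ F)(x)=\bigcup\{G(y):y\in F(x)\}$, and $F^{(m)}$ is the $m$-fold composition of $F$ with itself. $\mathrm{Fix}(G)=\{x\in X: x\in G(x)\}$. *)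

theory Defs
  imports "HOL-Analysis.Analysis"
begin

definition hausdorff_dist :: "'a::metric_space set \<Rightarrow> 'a set \<Rightarrow> real" where
  "hausdorff_dist A B = max (SUP a\<in>A. infdist a B) (SUP b\<in>B. infdist b A)"

definition ballX :: "'a::metric_space set \<Rightarrow> 'a \<Rightarrow> real \<Rightarrow> 'a set" where
  "ballX X x r = {z \<in> X. dist x z \<le> r}"

definition setvalued_compact :: "'a::metric_space set \<Rightarrow> ('a \<Rightarrow> 'a set) \<Rightarrow> bool" where
  "setvalued_compact X F \<longleftrightarrow> (\<forall>x\<in>X. F x \<noteq> {} \<and> compact (F x) \<and> F x \<subseteq> X)"

definition local_contraction :: "'a::metric_space set \<Rightarrow> ('a \<Rightarrow> 'a set) \<Rightarrow> bool" where
  "local_contraction X F \<longleftrightarrow>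
     (\<forall>x\<in>X. \<exists>r>0. \<exists>\<beta>. 0 \<le> \<beta> \<and> \<beta> < 1 \<and>
        (\<forall>y\<in>ballX X x r. \<forall>z\<in>ballX X x r. hausdorff_dist (F y) (F z) \<le> \<beta> * dist y z))"

definition uniform_local_contraction ::
    "'a::metric_space set \<Rightarrow> ('a \<Rightarrow> 'a set) \<Rightarrow> real \<Rightarrow> real \<Rightarrow> bool" where
  "uniform_local_contraction X F \<beta> r \<longleftrightarrow>
     r > 0 \<and> 0 \<le> \<beta> \<and> \<beta> < 1 \<and>
     (\<forall>x\<in>X. \<forall>y\<in>ballX X x r. \<forall>z\<in>ballX X x r. hausdorff_dist (F y) (F z) \<le> \<beta> * dist y z)"

definition r_chainable :: "'a::metric_space set \<Rightarrow> real \<Rightarrow> bool" where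
  "r_chainable X r \<longleftrightarrow>
     (\<forall>x\<in>X. \<forall>y\<in>X. \<exists>n::nat. \<exists>z::nat \<Rightarrow> 'a. z 0 = x \<and> z n = y \<and>
        (\<forall>i\<le>n. z i \<in> X) \<and> (\<forall>i<n. dist (z i) (z (Suc i)) < r))"

definition sv_comp :: "('a \<Rightarrow> 'a set) \<Rightarrow> ('a \<Rightarrow> 'a set) \<Rightarrow> 'a \<Rightarrow> 'a set" where
  "sv_comp G F x = (\<Union>y\<in>F x. G y)"

text \<open>m-fold composition F^(m) for m \<ge> 1 (sv_iter 0 F = F).\<close>
fun sv_iter :: "nat \<Rightarrow> ('a \<Rightarrow> 'a set) \<Rightarrow> 'a \<Rightarrow> 'a set" where
  "sv_iter 0 F = F"
| "sv_iter (Suc k) F = sv_comp F (sv_iter k F)"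

definition power_sv :: "('a \<Rightarrow> 'a set) \<Rightarrow> nat \<Rightarrow> 'a \<Rightarrow> 'a set" where
  "power_sv F m = sv_iter (m - 1) F"

definition Fix :: "'a set \<Rightarrow> ('a \<Rightarrow> 'a set) \<Rightarrow> 'a set" where
  "Fix X G = {x\<in>X. x \<in> G x}"

end

theory Submission
  imports Defs
begin

(* If F is a Hausdorff contraction with factor beta on all pairs at distance < r, then every
   r-chain from x to y lifts, starting at any a in F x, to an r-chain from a to a point of F y
   that is at most beta times as long; this lifting property survives composition.  For any
   map G with it, lifting a chain from x to a point of G x over and over gives chains from points
   to their images of length beta^k L, so the continuous displacement x |-> d(x, G x) has
   minimum 0 on the compact X, at a fixed point.  In (a) r-chainability supplies the first chain.
   In (b) a Lebesgue number gives a uniform scale r, and following F through a finite r-net some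
   net point recurs after m steps, producing an r-chain from a point x to a point of F^(m)(x). *)

lemma infdist_attained_compact:
  fixes A :: "'a::metric_space set"
  assumes "compact A" "A \<noteq> {}"
  obtains b where "b \<in> A" "infdist a A = dist a b"
proof -
  obtain b where b: "b \<in> A" "\<And>y. y \<in> A \<Longrightarrow> dist a b \<le> dist a y"
    using continuous_attains_inf[OF assms, of "dist a"] continuous_on_dist[OF continuous_on_const continuous_on_id]
    by blast
  have "dist a b \<le> infdist a A"
    unfolding infdist_def using assms b by (auto intro: cINF_greatest)
  with infdist_le[OF b(1), of a] show thesis using that b(1) by simp
qed

lemma setvalued_compactD:
  "setvalued_compact X F \<Longrightarrow> x \<in> X \<Longrightarrow> F x \<noteq> {} \<and> compact (F x) \<and> F x \<subseteq> X"
  unfolding setvalued_compact_def by blast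

lemma infdist_le_hausdorff_dist:
  fixes A B :: "'a::metric_space set"
  assumes "compact A" "a \<in> A"
  shows "infdist a B \<le> hausdorff_dist A B"
proof -
  have "compact ((\<lambda>a. infdist a B) ` A)"
    using assms(1) by (intro compact_continuous_image) (auto intro: continuous_intros)
  then have "bdd_above ((\<lambda>a. infdist a B) ` A)"
    by (simp add: bounded_imp_bdd_above compact_imp_bounded)
  then have "infdist a B \<le> (SUP a\<in>A. infdist a B)"
    using assms(2) by (rule cSUP_upper2) simp
  then show ?thesis unfolding hausdorff_dist_def by linarith
qed

definition r_chain :: "'a::metric_space set \<Rightarrow> real \<Rightarrow> 'a \<Rightarrow> 'a \<Rightarrow> nat \<Rightarrow> (nat \<Rightarrow> 'a) \<Rightarrow> bool" where
  "r_chain X r x y n z \<longleftrightarrow>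
     z 0 = x \<and> z n = y \<and> (\<forall>i\<le>n. z i \<in> X) \<and> (\<forall>i<n. dist (z i) (z (Suc i)) < r)"

definition chain_length :: "nat \<Rightarrow> (nat \<Rightarrow> 'a::metric_space) \<Rightarrow> real" where
  "chain_length n z = (\<Sum>i<n. dist (z i) (z (Suc i)))"

lemma r_chainable_iff_r_chain:
  "r_chainable X r \<longleftrightarrow> (\<forall>x\<in>X. \<forall>y\<in>X. \<exists>n z. r_chain X r x y n z)"
  unfolding r_chainable_def r_chain_def by blast

lemma r_chain_endpoints:
  "r_chain X r x y n z \<Longrightarrow> x \<in> X \<and> y \<in> X"
  unfolding r_chain_def by (metis le0 order_refl)

lemma r_chain_refl: "x \<in> X \<Longrightarrow> r_chain X r x x 0 (\<lambda>_. x)"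
  unfolding r_chain_def by simp

lemma r_chain_single:
  "x \<in> X \<Longrightarrow> y \<in> X \<Longrightarrow> dist x y < r \<Longrightarrow> r_chain X r x y 1 (\<lambda>i. if i = 0 then x else y)"
  unfolding r_chain_def by auto

lemma r_chain_Cons:
  assumes "r_chain X r x y n z" "p \<in> X" "dist p x < r"
  shows "r_chain X r p y (Suc n) (case_nat p z)"
  using assms unfolding r_chain_def by (auto simp: less_Suc_eq_0_disj le_Suc_eq split: nat.split)

lemma r_chain_tl:
  "r_chain X r x y (Suc n) z \<Longrightarrow> r_chain X r (z 1) y n (\<lambda>i. z (Suc i))"
  unfolding r_chain_def by auto

lemma chain_length_nonneg: "chain_length n z \<ge> 0"
  unfolding chain_length_def by (simp add: sum_nonneg)

lemma chain_length_Suc_shift: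
  "chain_length (Suc n) z = dist (z 0) (z 1) + chain_length n (\<lambda>i. z (Suc i))"
  unfolding chain_length_def sum.lessThan_Suc_shift by simp

lemma chain_length_single: "chain_length 1 (\<lambda>i. if i = 0 then x else y) = dist x y"
  unfolding chain_length_def by simp

lemma dist_le_chain_length: "dist (z 0) (z n) \<le> chain_length n z"
proof (induction n)
  case (Suc n)
  have "dist (z 0) (z (Suc n)) \<le> dist (z 0) (z n) + dist (z n) (z (Suc n))"
    by (rule dist_triangle)
  also have "\<dots> \<le> chain_length (Suc n) z"
    using Suc by (simp add: chain_length_def)
  finally show ?case .
qed (simp add: chain_length_def)

definition contraction_at_scale ::
    "'a::metric_space set \<Rightarrow> ('a \<Rightarrow> 'a set) \<Rightarrow> real \<Rightarrow> real \<Rightarrow> bool" where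
  "contraction_at_scale X F \<beta> r \<longleftrightarrow>
     (\<forall>y\<in>X. \<forall>z\<in>X. dist y z < r \<longrightarrow> hausdorff_dist (F y) (F z) \<le> \<beta> * dist y z)"

definition chain_contracting ::
    "'a::metric_space set \<Rightarrow> real \<Rightarrow> ('a \<Rightarrow> 'a set) \<Rightarrow> real \<Rightarrow> bool" where
  "chain_contracting X r G \<beta> \<longleftrightarrow>
     (\<forall>x y n z a. r_chain X r x y n z \<longrightarrow> a \<in> G x \<longrightarrow>
        (\<exists>b m w. b \<in> G y \<and> r_chain X r a b m w \<and> chain_length m w \<le> \<beta> * chain_length n z))"

lemma uniform_local_contraction_imp_contraction_at_scale:
  assumes "uniform_local_contraction X F \<beta> r"
  shows "contraction_at_scale X F \<beta> r"
  unfolding contraction_at_scale_def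
proof (intro ballI impI)
  fix y z assume yz: "y \<in> X" "z \<in> X" "dist y z < r"
  then have "y \<in> ballX X y r" "z \<in> ballX X y r"
    using assms unfolding ballX_def uniform_local_contraction_def by auto
  then show "hausdorff_dist (F y) (F z) \<le> \<beta> * dist y z"
    using assms yz(1) unfolding uniform_local_contraction_def by blast
qed

lemma contraction_at_scale_nearby_point:
  assumes "setvalued_compact X F" "contraction_at_scale X F \<beta> r"
    and "y \<in> X" "z \<in> X" "dist y z < r" "a \<in> F y"
  obtains b where "b \<in> F z" "dist a b \<le> \<beta> * dist y z"
proof -
  have "compact (F y)" "compact (F z)" "F z \<noteq> {}"
    using setvalued_compactD[OF assms(1)] assms(3,4) by auto
  then obtain b where b: "b \<in> F z" "infdist a (F z) = dist a b"
    using infdist_attained_compact by metis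
  have "infdist a (F z) \<le> hausdorff_dist (F y) (F z)"
    using \<open>compact (F y)\<close> assms(6) by (rule infdist_le_hausdorff_dist)
  also have "\<dots> \<le> \<beta> * dist y z"
    using assms(2-5) unfolding contraction_at_scale_def by blast
  finally show thesis using that b by simp
qed

lemma contraction_at_scale_imp_chain_contracting:
  assumes SV: "setvalued_compact X F" and C: "contraction_at_scale X F \<beta> r"
    and "0 \<le> \<beta>" "\<beta> \<le> 1"
  shows "chain_contracting X r F \<beta>"
  unfolding chain_contracting_def
proof (intro allI impI)
  fix x y n z a
  assume "r_chain X r x y n z" "a \<in> F x"
  then show "\<exists>b m w. b \<in> F y \<and> r_chain X r a b m w \<and> chain_length m w \<le> \<beta> * chain_length n z"
  proof (induction n arbitrary: x z a)
    case 0
    then have "x = y" "a \<in> X"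
      using SV r_chain_endpoints unfolding r_chain_def setvalued_compact_def by auto
    then show ?case
      using 0 r_chain_refl[of a X r] \<open>0 \<le> \<beta>\<close> chain_length_nonneg[of 0 z]
      by (intro exI[of _ a] exI[of _ 0] exI[of _ "\<lambda>_. a"]) (simp add: chain_length_def)
  next
    case (Suc n)
    have x: "x \<in> X" "z 1 \<in> X" "dist x (z 1) < r"
      using Suc.prems(1) unfolding r_chain_def by auto
    obtain a' where a': "a' \<in> F (z 1)" "dist a a' \<le> \<beta> * dist x (z 1)"
      using contraction_at_scale_nearby_point[OF SV C x Suc.prems(2)] .
    obtain b m w where bmw: "b \<in> F y" "r_chain X r a' b m w"
        "chain_length m w \<le> \<beta> * chain_length n (\<lambda>i. z (Suc i))"
      using Suc.IH[OF r_chain_tl[OF Suc.prems(1)] a'(1)] by blast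
    have "a \<in> X" using Suc.prems(2) setvalued_compactD[OF SV x(1)] by blast
    moreover have "dist a a' < r"
      using a'(2) x(3) mult_left_le_one_le[OF zero_le_dist[of x "z 1"] \<open>0 \<le> \<beta>\<close> \<open>\<beta> \<le> 1\<close>] by linarith
    ultimately have "r_chain X r a b (Suc m) (case_nat a w)"
      using bmw(2) by (intro r_chain_Cons)
    moreover have "chain_length (Suc m) (case_nat a w) \<le> \<beta> * chain_length (Suc n) z"
      using a'(2) bmw(2,3) Suc.prems(1)
      by (simp add: chain_length_Suc_shift r_chain_def distrib_left)
    ultimately show ?case using bmw(1) by blast
  qed
qed

lemma chain_contracting_sv_comp:
  assumes G: "chain_contracting X r G \<beta>" and F: "chain_contracting X r F \<beta>"
    and "0 \<le> \<beta>" "\<beta> \<le> 1"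
  shows "chain_contracting X r (sv_comp F G) \<beta>"
  unfolding chain_contracting_def
proof (intro allI impI)
  fix x y n z a
  assume ch: "r_chain X r x y n z" and "a \<in> sv_comp F G x"
  then obtain u where u: "u \<in> G x" "a \<in> F u" unfolding sv_comp_def by auto
  obtain u' m w where 1: "u' \<in> G y" "r_chain X r u u' m w" "chain_length m w \<le> \<beta> * chain_length n z"
    using G ch u(1) unfolding chain_contracting_def by blast
  obtain b k v where 2: "b \<in> F u'" "r_chain X r a b k v" "chain_length k v \<le> \<beta> * chain_length m w"
    using F 1(2) u(2) unfolding chain_contracting_def by blast
  have "\<beta> * chain_length m w \<le> chain_length m w"
    using mult_left_le_one_le[OF chain_length_nonneg assms(3,4)] .
  moreover have "b \<in> sv_comp F G y" using 1(1) 2(1) unfolding sv_comp_def by auto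
  ultimately show "\<exists>b m w. b \<in> sv_comp F G y \<and> r_chain X r a b m w \<and>
      chain_length m w \<le> \<beta> * chain_length n z"
    using 1(3) 2(2,3) by fastforce
qed

lemma chain_contracting_sv_iter:
  assumes "chain_contracting X r F \<beta>" "0 \<le> \<beta>" "\<beta> \<le> 1"
  shows "chain_contracting X r (sv_iter k F) \<beta>"
  by (induction k) (auto intro: chain_contracting_sv_comp assms)

lemma closed_graph_if_contraction_at_scale:
  assumes "closed X" "setvalued_compact X F" "contraction_at_scale X F \<beta> r" "r > 0"
  shows "closed {p. fst p \<in> X \<and> snd p \<in> F (fst p)}"
  unfolding closed_sequential_limits
proof (intro allI impI, elim conjE)
  fix f l assume graph: "\<forall>n. f n \<in> {p. fst p \<in> X \<and> snd p \<in> F (fst p)}" and "f \<longlonglongrightarrow> l"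
  define u b where "u n = fst (f n)" and "b n = snd (f n)" for n
  have u: "u \<longlonglongrightarrow> fst l" and b: "b \<longlonglongrightarrow> snd l"
    unfolding u_def b_def using \<open>f \<longlonglongrightarrow> l\<close> by (auto intro: tendsto_fst tendsto_snd)
  have "fst l \<in> X"
    using closed_sequentially[OF \<open>closed X\<close> _ u] graph unfolding u_def by auto
  then have Fl: "closed (F (fst l))" "F (fst l) \<noteq> {}"
    using assms(2) unfolding setvalued_compact_def by (auto intro: compact_imp_closed)
  have "\<forall>\<^sub>F n in sequentially. dist (u n) (fst l) < r"
    using u \<open>r > 0\<close> by (rule tendstoD)
  then have ev: "\<forall>\<^sub>F n in sequentially.
      infdist (snd l) (F (fst l)) \<le> \<beta> * dist (u n) (fst l) + dist (b n) (snd l)"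
  proof eventually_elim
    case (elim n)
    obtain c where c: "c \<in> F (fst l)" "dist (b n) c \<le> \<beta> * dist (u n) (fst l)"
      using contraction_at_scale_nearby_point[OF assms(2,3) _ \<open>fst l \<in> X\<close> elim] graph
      unfolding u_def b_def by blast
    have "infdist (snd l) (F (fst l)) \<le> infdist (b n) (F (fst l)) + dist (b n) (snd l)"
      by (metis infdist_triangle dist_commute)
    also have "\<dots> \<le> \<beta> * dist (u n) (fst l) + dist (b n) (snd l)"
      using infdist_le[OF c(1), of "b n"] c(2) by linarith
    finally show ?case .
  qed
  have "(\<lambda>n. dist (u n) (fst l)) \<longlonglongrightarrow> 0" "(\<lambda>n. dist (b n) (snd l)) \<longlonglongrightarrow> 0"
    using u b by (simp_all add: tendsto_dist_iff[symmetric])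
  then have "(\<lambda>n. \<beta> * dist (u n) (fst l) + dist (b n) (snd l)) \<longlonglongrightarrow> \<beta> * 0 + 0"
    by (intro tendsto_intros)
  then have "infdist (snd l) (F (fst l)) \<le> 0"
    using tendsto_lowerbound[OF _ ev] by simp
  then have "snd l \<in> F (fst l)"
    using in_closed_iff_infdist_zero[OF Fl] infdist_nonneg[of "snd l" "F (fst l)"] by simp
  then show "l \<in> {p. fst p \<in> X \<and> snd p \<in> F (fst p)}"
    using \<open>fst l \<in> X\<close> by simp
qed

lemma compact_UN_if_contraction_at_scale:
  assumes "compact X" "setvalued_compact X F" "contraction_at_scale X F \<beta> r" "r > 0"
    and "compact K" "K \<subseteq> X"
  shows "compact (\<Union>u\<in>K. F u)"
proof -
  let ?graph = "{p. fst p \<in> X \<and> snd p \<in> F (fst p)}"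
  have "compact ((K \<times> X) \<inter> ?graph)"
    using assms by (intro compact_Int_closed compact_Times closed_graph_if_contraction_at_scale)
      (auto intro: compact_imp_closed)
  then have "compact (snd ` ((K \<times> X) \<inter> ?graph))"
    by (rule compact_continuous_image[rotated]) (intro continuous_intros)
  moreover have "snd ` ((K \<times> X) \<inter> ?graph) = (\<Union>u\<in>K. F u)"
  proof
    show "(\<Union>u\<in>K. F u) \<subseteq> snd ` ((K \<times> X) \<inter> ?graph)"
    proof
      fix b assume "b \<in> (\<Union>u\<in>K. F u)"
      then obtain u where "u \<in> K" "b \<in> F u" by blast
      moreover have "F u \<subseteq> X"
        using \<open>u \<in> K\<close> assms(6) setvalued_compactD[OF assms(2)] by blast
      ultimately show "b \<in> snd ` ((K \<times> X) \<inter> ?graph)"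
        using assms(6) by (intro rev_image_eqI[of "(u, b)"]) auto
    qed
  qed auto
  ultimately show ?thesis by simp
qed

lemma setvalued_compact_sv_comp:
  assumes "compact X" "setvalued_compact X F" "contraction_at_scale X F \<beta> r" "r > 0"
    and G: "setvalued_compact X G"
  shows "setvalued_compact X (sv_comp F G)"
  unfolding setvalued_compact_def sv_comp_def
proof (intro ballI conjI)
  fix x assume "x \<in> X"
  then have Gx: "G x \<noteq> {}" "compact (G x)" "G x \<subseteq> X"
    using G unfolding setvalued_compact_def by auto
  then show "(\<Union>y\<in>G x. F y) \<noteq> {}" "(\<Union>y\<in>G x. F y) \<subseteq> X"
    using assms(2) unfolding setvalued_compact_def by blast+
  show "compact (\<Union>y\<in>G x. F y)"
    using compact_UN_if_contraction_at_scale[OF assms(1-4) Gx(2,3)] .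
qed

lemma setvalued_compact_sv_iter:
  assumes "compact X" "setvalued_compact X F" "contraction_at_scale X F \<beta> r" "r > 0"
  shows "setvalued_compact X (sv_iter k F)"
  by (induction k) (simp_all add: assms(2) setvalued_compact_sv_comp[OF assms])

lemma chain_contracting_shrinking_chains:
  assumes "chain_contracting X r G \<beta>" "0 \<le> \<beta>" "r_chain X r x0 a0 n0 z0" "a0 \<in> G x0"
  shows "\<exists>x a n z. a \<in> G x \<and> r_chain X r x a n z \<and> chain_length n z \<le> \<beta> ^ k * chain_length n0 z0"
proof (induction k)
  case 0
  show ?case using assms(3,4) by auto
next
  case (Suc k)
  then obtain x a n z where "a \<in> G x" "r_chain X r x a n z"
      "chain_length n z \<le> \<beta> ^ k * chain_length n0 z0"
    by blast
  obtain b m w where "b \<in> G a" "r_chain X r a b m w"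
      "chain_length m w \<le> \<beta> * chain_length n z"
    using assms(1) \<open>r_chain X r x a n z\<close> \<open>a \<in> G x\<close> unfolding chain_contracting_def by blast
  note \<open>chain_length m w \<le> \<beta> * chain_length n z\<close>
  also have "\<beta> * chain_length n z \<le> \<beta> * (\<beta> ^ k * chain_length n0 z0)"
    using \<open>chain_length n z \<le> _\<close> \<open>0 \<le> \<beta>\<close> by (rule mult_left_mono)
  finally have "chain_length m w \<le> \<beta> ^ Suc k * chain_length n0 z0"
    by simp
  then show ?case using \<open>b \<in> G a\<close> \<open>r_chain X r a b m w\<close> by blast
qed

lemma chain_contracting_infdist_lipschitz:
  assumes "chain_contracting X r G \<beta>" "\<beta> \<le> 1" "setvalued_compact X G"
    and "x \<in> X" "y \<in> X" "dist x y < r"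
  shows "infdist y (G y) \<le> infdist x (G x) + 2 * dist x y"
proof -
  obtain a where a: "a \<in> G x" "infdist x (G x) = dist x a"
    using setvalued_compactD[OF assms(3,4)] infdist_attained_compact by metis
  obtain b m w where b: "b \<in> G y" "r_chain X r a b m w"
      "chain_length m w \<le> \<beta> * chain_length 1 (\<lambda>i. if i = 0 then x else y)"
    using assms(1) r_chain_single[OF assms(4-6)] a(1) unfolding chain_contracting_def by blast
  have "dist a b \<le> chain_length m w"
    using dist_le_chain_length[of w m] b(2) unfolding r_chain_def by simp
  also have "\<dots> \<le> \<beta> * dist x y"
    using b(3) unfolding chain_length_single .
  also have "\<dots> \<le> dist x y"
    using mult_right_mono[OF \<open>\<beta> \<le> 1\<close> zero_le_dist[of x y]] by simp
  finally have "dist a b \<le> dist x y" .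
  then have "dist y b \<le> dist x a + 2 * dist x y"
    using dist_triangle[of y b x] dist_triangle[of x b a] by (simp add: dist_commute)
  then show ?thesis using infdist_le[OF b(1), of y] a(2) by linarith
qed

lemma continuous_on_infdist_chain_contracting:
  assumes "chain_contracting X r G \<beta>" "\<beta> \<le> 1" "setvalued_compact X G" "r > 0"
  shows "continuous_on X (\<lambda>x. infdist x (G x))"
  unfolding continuous_on_iff
proof (intro ballI allI impI)
  fix x e assume "x \<in> X" "(0::real) < e"
  show "\<exists>d>0. \<forall>y\<in>X. dist y x < d \<longrightarrow> dist (infdist y (G y)) (infdist x (G x)) < e"
  proof (intro exI[of _ "min r (e / 2)"] conjI ballI impI)
    fix y assume "y \<in> X" "dist y x < min r (e / 2)"
    then show "dist (infdist y (G y)) (infdist x (G x)) < e"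
      using chain_contracting_infdist_lipschitz[OF assms(1-3) \<open>x \<in> X\<close> \<open>y \<in> X\<close>]
        chain_contracting_infdist_lipschitz[OF assms(1-3) \<open>y \<in> X\<close> \<open>x \<in> X\<close>]
      by (auto simp: dist_real_def dist_commute abs_le_iff)
  qed (use \<open>r > 0\<close> \<open>0 < e\<close> in auto)
qed

lemma chain_contracting_fixed_point:
  assumes "compact X" "r > 0" "0 \<le> \<beta>" "\<beta> < 1"
    and "setvalued_compact X G" "chain_contracting X r G \<beta>"
    and "r_chain X r x0 a0 n0 z0" "a0 \<in> G x0"
  shows "Fix X G \<noteq> {}"
proof -
  let ?d = "\<lambda>x. infdist x (G x)"
  have small: "\<exists>x\<in>X. ?d x < e" if "e > 0" for e
  proof -
    have "(\<lambda>k. \<beta> ^ k * chain_length n0 z0) \<longlonglongrightarrow> 0 * chain_length n0 z0"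
      using assms(3,4) by (intro tendsto_intros LIMSEQ_power_zero) simp
    then have "\<forall>\<^sub>F k in sequentially. \<beta> ^ k * chain_length n0 z0 < e"
      using \<open>e > 0\<close> by (auto dest: order_tendstoD(2))
    then obtain k where "\<beta> ^ k * chain_length n0 z0 < e"
      unfolding eventually_sequentially by blast
    then obtain x a n z where xa: "a \<in> G x" "r_chain X r x a n z" "chain_length n z < e"
      using chain_contracting_shrinking_chains[OF assms(6,3,7,8)] by (meson le_less_trans)
    have "?d x \<le> dist x a" using xa(1) by (rule infdist_le)
    also have "\<dots> \<le> chain_length n z"
      using dist_le_chain_length[of z n] xa(2) unfolding r_chain_def by simp
    also note \<open>chain_length n z < e\<close>
    finally show ?thesis using r_chain_endpoints[OF xa(2)] by blast
  qed
  have "X \<noteq> {}" using r_chain_endpoints[OF assms(7)] by blast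
  then obtain x where x: "x \<in> X" "\<And>y. y \<in> X \<Longrightarrow> ?d x \<le> ?d y"
    using continuous_attains_inf[OF assms(1) _
        continuous_on_infdist_chain_contracting[OF assms(6) _ assms(5,2)]] assms(4) by auto
  have "?d x \<le> 0"
  proof (rule field_le_epsilon)
    fix e :: real assume "e > 0"
    then obtain y where "y \<in> X" "?d y < e" using small by blast
    then show "?d x \<le> 0 + e" using x(2) by fastforce
  qed
  then have "x \<in> G x"
    using in_closed_iff_infdist_zero[of "G x" x] infdist_nonneg[of x "G x"] assms(5) x(1)
    unfolding setvalued_compact_def by (auto intro: compact_imp_closed)
  then show ?thesis using x(1) unfolding Fix_def by blast
qed

lemma local_contraction_imp_contraction_at_scale:
  assumes "compact X" "local_contraction X F"
  obtains \<beta> r where "0 \<le> \<beta>" "\<beta> < 1" "r > 0" "contraction_at_scale X F \<beta> r"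
proof -
  obtain R B where RB: "\<And>x. x \<in> X \<Longrightarrow> R x > 0 \<and> 0 \<le> B x \<and> B x < 1 \<and>
      (\<forall>y\<in>ballX X x (R x). \<forall>z\<in>ballX X x (R x). hausdorff_dist (F y) (F z) \<le> B x * dist y z)"
    using assms(2) unfolding local_contraction_def by metis
  have "X \<subseteq> (\<Union>x\<in>X. ball x (R x))" using RB by force
  then obtain D where D: "D \<subseteq> X" "finite D" "X \<subseteq> (\<Union>x\<in>D. ball x (R x))"
    using compactE_image[OF assms(1), of X "\<lambda>x. ball x (R x)"] by blast
  obtain r where r: "r > 0" "\<And>y. y \<in> X \<Longrightarrow> \<exists>g\<in>(\<lambda>x. ball x (R x)) ` D. ball y r \<subseteq> g"
    using Heine_Borel_lemma[OF assms(1) D(3)] by blast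
  define \<beta> where "\<beta> = Max (insert 0 (B ` D))"
  have "\<beta> \<in> insert 0 (B ` D)"
    unfolding \<beta>_def using D(2) by (intro Max_in) auto
  then have "0 \<le> \<beta>" "\<beta> < 1"
    unfolding \<beta>_def using RB D by auto
  moreover have "contraction_at_scale X F \<beta> r"
    unfolding contraction_at_scale_def
  proof (intro ballI impI)
    fix y z assume yz: "y \<in> X" "z \<in> X" "dist y z < r"
    obtain x where x: "x \<in> D" "ball y r \<subseteq> ball x (R x)" using r(2)[OF yz(1)] by blast
    have "y \<in> ball y r" "z \<in> ball y r" using r(1) yz(3) by auto
    then have "y \<in> ballX X x (R x)" "z \<in> ballX X x (R x)"
      using x(2) yz unfolding ballX_def by (auto simp: subset_iff less_imp_le)
    then have "hausdorff_dist (F y) (F z) \<le> B x * dist y z" using RB x(1) D(1) by blast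
    also have "\<dots> \<le> \<beta> * dist y z"
      unfolding \<beta>_def using D(2) x(1) by (intro mult_right_mono) auto
    finally show "hausdorff_dist (F y) (F z) \<le> \<beta> * dist y z" .
  qed
  ultimately show thesis using r(1) that by blast
qed

lemma chain_contracting_pseudo_orbit:
  assumes "chain_contracting X r F \<beta>" "setvalued_compact X F"
    and "\<And>i. p i \<in> X" "\<And>i. \<exists>a\<in>F (p i). dist (p (Suc i)) a < r"
  shows "\<exists>u\<in>sv_iter j F (p 0). \<exists>n z. r_chain X r (p (Suc j)) u n z"
proof (induction j)
  case 0
  obtain a where a: "a \<in> F (p 0)" "dist (p (Suc 0)) a < r" using assms(4)[of 0] by blast
  moreover have "a \<in> X"
    using a(1) setvalued_compactD[OF assms(2,3)] by blast
  ultimately show ?case using r_chain_single[OF assms(3) \<open>a \<in> X\<close> a(2)] by auto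
next
  case (Suc j)
  then obtain u n z where u: "u \<in> sv_iter j F (p 0)" "r_chain X r (p (Suc j)) u n z" by blast
  obtain a where a: "a \<in> F (p (Suc j))" "dist (p (Suc (Suc j))) a < r" using assms(4) by blast
  obtain b m w where b: "b \<in> F u" "r_chain X r a b m w"
    using assms(1) u(2) a(1) unfolding chain_contracting_def by blast
  have "r_chain X r (p (Suc (Suc j))) b (Suc m) (case_nat (p (Suc (Suc j))) w)"
    using b(2) assms(3) a(2) by (rule r_chain_Cons)
  moreover have "b \<in> sv_iter (Suc j) F (p 0)" using u(1) b(1) by (auto simp: sv_comp_def)
  ultimately show ?case by blast
qed

lemma chain_contracting_return_chain:
  assumes "compact X" "X \<noteq> {}" "r > 0" "setvalued_compact X F" "chain_contracting X r F \<beta>"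
  obtains m x a n z where "m > 0" "a \<in> power_sv F m x" "r_chain X r x a n z"
proof -
  have "X \<subseteq> (\<Union>x\<in>X. ball x r)" using \<open>r > 0\<close> by (auto intro!: bexI)
  then obtain P where P: "P \<subseteq> X" "finite P" "X \<subseteq> (\<Union>x\<in>P. ball x r)"
    using compactE_image[OF assms(1), of X "\<lambda>x. ball x r"] by blast
  have step: "\<exists>y. y \<in> P \<and> (\<exists>a\<in>F x. dist y a < r)" if "x \<in> P" for x
  proof -
    have "x \<in> X" using that P(1) by blast
    then have "F x \<noteq> {}" "F x \<subseteq> X" using setvalued_compactD[OF assms(4)] by auto
    then obtain a where "a \<in> F x" "a \<in> X" by blast
    moreover obtain y where "y \<in> P" "dist y a < r" using P(3) \<open>a \<in> X\<close> by auto
    ultimately show ?thesis by blast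
  qed
  have "\<exists>p. \<forall>i. p i \<in> P \<and> (\<exists>a\<in>F (p i). dist (p (Suc i)) a < r)"
  proof (rule dependent_nat_choice)
    show "\<exists>x. x \<in> P" using assms(2) P(3) by blast
  qed (use step in blast)
  then obtain p where p: "\<And>i. p i \<in> P" "\<And>i. \<exists>a\<in>F (p i). dist (p (Suc i)) a < r"
    by blast
  have "range p \<subseteq> P" using p(1) by blast
  then have "finite (range p)" using P(2) by (rule finite_subset)
  then have "\<not> inj p" using finite_imageD[of p UNIV] by auto
  then obtain s t where "s < t" "p s = p t"
    unfolding inj_def by (metis linorder_neqE_nat)
  define j where "j = t - Suc s"
  have "p (s + i) \<in> X" for i using p(1) P(1) by blast
  moreover have "\<exists>a\<in>F (p (s + i)). dist (p (s + Suc i)) a < r" for i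
    using p(2)[of "s + i"] by simp
  ultimately have "\<exists>a\<in>sv_iter j F (p (s + 0)). \<exists>n z. r_chain X r (p (s + Suc j)) a n z"
    by (rule chain_contracting_pseudo_orbit[OF assms(5,4), where p = "\<lambda>i. p (s + i)"])
  then obtain a n z where "a \<in> sv_iter j F (p s)" "r_chain X r (p (Suc (s + j))) a n z"
    by auto
  moreover have "power_sv F (t - s) = sv_iter j F" "p (Suc (s + j)) = p s"
    unfolding power_sv_def j_def using \<open>s < t\<close> \<open>p s = p t\<close> by auto
  ultimately show thesis using that[of "t - s"] \<open>s < t\<close> by auto
qed

theorem proposition11:
  fixes X :: "'a::metric_space set" and F :: "'a \<Rightarrow> 'a set"
  assumes "X \<noteq> {}" and "compact X"
    and "setvalued_compact X F"
    and "local_contraction X F"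
  shows "(\<forall>r \<beta>. r_chainable X r \<and> uniform_local_contraction X F \<beta> r \<longrightarrow> Fix X F \<noteq> {})
    \<and> (finite (components X) \<and> (\<forall>x\<in>X. connected (F x))
         \<longrightarrow> (\<exists>m::nat. m > 0 \<and> Fix X (power_sv F m) \<noteq> {}))"
proof (intro conjI allI impI; elim conjE)
  obtain x a where "x \<in> X" "a \<in> F x"
    using assms(1) setvalued_compactD[OF assms(3)] by blast
  fix r \<beta> assume "r_chainable X r" "uniform_local_contraction X F \<beta> r"
  then have \<beta>: "r > 0" "0 \<le> \<beta>" "\<beta> < 1" and "contraction_at_scale X F \<beta> r"
    using uniform_local_contraction_imp_contraction_at_scale
    unfolding uniform_local_contraction_def by auto
  then have "chain_contracting X r F \<beta>"
    using contraction_at_scale_imp_chain_contracting[OF assms(3)] by simp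
  moreover obtain n z where "r_chain X r x a n z"
    using \<open>r_chainable X r\<close> \<open>x \<in> X\<close> setvalued_compactD[OF assms(3) \<open>x \<in> X\<close>] \<open>a \<in> F x\<close>
    unfolding r_chainable_iff_r_chain by blast
  ultimately show "Fix X F \<noteq> {}"
    by (rule chain_contracting_fixed_point[OF assms(2) \<beta> assms(3)]) (rule \<open>a \<in> F x\<close>)
next
  obtain \<beta> r where \<beta>: "0 \<le> \<beta>" "\<beta> < 1" "r > 0" and "contraction_at_scale X F \<beta> r"
    using local_contraction_imp_contraction_at_scale[OF assms(2,4)] .
  then have "chain_contracting X r F \<beta>"
    using contraction_at_scale_imp_chain_contracting[OF assms(3)] by simp
  then obtain m x a n z where "m > 0" "a \<in> power_sv F m x" "r_chain X r x a n z"
    by (rule chain_contracting_return_chain[OF assms(2,1) \<open>r > 0\<close> assms(3)])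
  have "setvalued_compact X (power_sv F m)"
    unfolding power_sv_def using assms(2,3) \<open>contraction_at_scale X F \<beta> r\<close> \<open>r > 0\<close>
    by (rule setvalued_compact_sv_iter)
  moreover have "chain_contracting X r (power_sv F m) \<beta>"
    unfolding power_sv_def using \<open>chain_contracting X r F \<beta>\<close> \<beta>(1,2)
    by (simp add: chain_contracting_sv_iter)
  ultimately have "Fix X (power_sv F m) \<noteq> {}"
    using \<open>r_chain X r x a n z\<close> \<open>a \<in> power_sv F m x\<close>
    by (rule chain_contracting_fixed_point[OF assms(2) \<open>r > 0\<close> \<beta>(1,2)])
  with \<open>m > 0\<close> show "\<exists>m::nat. m > 0 \<and> Fix X (power_sv F m) \<noteq> {}" by blast
qed

end
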